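(* Define $\mathrm{Mex}(F)=\min(\mathbb{N}_0\setminus F)$ for $F\subseteq\mathbb{N}_0$, and $a+D=\{a+d:d\in D\}$. Define triples $v(n)=(v_1(n),v_2(n),v_3(n))$, $n\ge 0$, recursively by $v(0)=(0,0,0)$ and, for $n\ge 0$, with $F_n=\{v_i(k): 0\le k\le n,\ i\in\{1,2,3\}\}$ and $D_n=\bigcup_{k=0}^{n}\{v_2(k)-v_1(k),\,v_3(k)-v_2(k),\,v_3(k)-v_1(k)\}$, \[ v_1(n+1)=\mathrm{Mex}(F_n),\quad v_2(n+1)=\mathrm{Mex}\big((v_1(n+1)+D_n)\cup\{1,\dots,v_1(n+1)\}\cup F_n\big), \] \[ v_3(n+1)=\mathrm{Mex}\big((v_2(n+1)+D_n)\cup\{1,\dots,v_2(n+1)\}\cup F_n\big). \] Then for every $n\ge 0$, $v_1(n)-2v_2(n)+v_3(n)\in\{0,-1,-2\}$.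
   Context: $\mathbb{N}_0$ denotes the nonnegative integers. *)

theory Defs
  imports Main
begin

definition Mex :: "int set \<Rightarrow> int" where
  "Mex F = int (LEAST k::nat. int k \<notin> F)"

definition Fset :: "(int \<times> int \<times> int) list \<Rightarrow> int set" where
  "Fset L = (\<Union>(a,b,c)\<in>set L. {a, b, c})"

definition Dset :: "(int \<times> int \<times> int) list \<Rightarrow> int set" where
  "Dset L = (\<Union>(a,b,c)\<in>set L. {b - a, c - b, c - a})"

definition next_triple :: "(int \<times> int \<times> int) list \<Rightarrow> int \<times> int \<times> int" where
  "next_triple L =
     (let F = Fset L; D = Dset L;
          x1 = Mex F;
          x2 = Mex (((\<lambda>d. x1 + d) ` D) \<union> {1..x1} \<union> F);
          x3 = Mex (((\<lambda>d. x2 + d) ` D) \<union> {1..x2} \<union> F)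
      in (x1, x2, x3))"

primrec vs :: "nat \<Rightarrow> (int \<times> int \<times> int) list" where
  "vs 0 = [(0,0,0)]"
| "vs (Suc n) = vs n @ [next_triple (vs n)]"

definition v :: "nat \<Rightarrow> int \<times> int \<times> int" where
  "v n = vs n ! n"

definition v1 :: "nat \<Rightarrow> int" where "v1 n = fst (v n)"
definition v2 :: "nat \<Rightarrow> int" where "v2 n = fst (snd (v n))"
definition v3 :: "nat \<Rightarrow> int" where "v3 n = snd (snd (v n))"

end

theory Submission
  imports Defs
begin

text \<open>
  Write \<open>a = Mex F\<^sub>n\<close> and \<open>m = Mex D\<^sub>n\<close>. An invariant of the construction controls the
  sets above these thresholds: every coordinate \<open>\<ge> a + m\<close> is a third coordinate, third
  coordinates are \<open>\<le> a + 2m - 3\<close> and pairwise at least 3 apart, and every difference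
  \<open>d \<ge> m\<close> satisfies \<open>d \<le> 2m - 2\<close> and \<open>d + 1 \<notin> D\<^sub>n\<close>. Under this invariant the Mex
  computations can be carried out explicitly: \<open>v(n+1) = (a, a+m+\<delta>, a+2m+\<delta>)\<close> where \<open>\<delta> \<in> {0,1,2}\<close>
  counts how many of \<open>a+m \<in> F\<^sub>n\<close>, \<open>m+1 \<in> D\<^sub>n\<close> hold in a row. The new triple preserves
  the invariant, and \<open>v\<^sub>1 - 2v\<^sub>2 + v\<^sub>3 = -\<delta>\<close>.
\<close>

lemma Mex_nonneg: "0 \<le> Mex S"
  unfolding Mex_def by simp

lemma Mex_notin:
  assumes "finite S"
  shows "Mex S \<notin> S"
proof -
  have "finite (int -` S)" using assms by (simp add: finite_vimageI)
  then obtain k :: nat where "int k \<notin> S"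
    using ex_new_if_finite[OF infinite_UNIV_nat] by blast
  then have "int (LEAST k::nat. int k \<notin> S) \<notin> S" by (rule LeastI)
  then show ?thesis unfolding Mex_def .
qed

lemma mem_if_less_Mex:
  assumes "0 \<le> j" "j < Mex S"
  shows "j \<in> S"
proof -
  have "nat j < (LEAST k::nat. int k \<notin> S)" using assms unfolding Mex_def by linarith
  then have "\<not> int (nat j) \<notin> S" by (rule not_less_Least)
  then show ?thesis using assms by simp
qed

lemma Mex_le:
  assumes "0 \<le> k" "k \<notin> S"
  shows "Mex S \<le> k"
proof -
  have "(LEAST i::nat. int i \<notin> S) \<le> nat k" by (rule Least_le) (use assms in simp)
  then show ?thesis unfolding Mex_def using assms(1) by linarith
qed

lemma Mex_geI:
  assumes "finite S" "\<And>j. 0 \<le> j \<Longrightarrow> j < k \<Longrightarrow> j \<in> S"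
  shows "k \<le> Mex S"
  using Mex_notin[OF assms(1)] assms(2)[of "Mex S"] Mex_nonneg[of S] by force

lemma Mex_ge_add1:
  assumes "finite S" "k \<le> Mex S" "k \<in> S"
  shows "k + 1 \<le> Mex S"
  using Mex_notin[OF assms(1)] assms(2,3) by (cases "Mex S = k") auto

lemma Mex_pos:
  assumes "finite S" "0 \<in> S"
  shows "1 \<le> Mex S"
  using Mex_ge_add1[OF assms(1) Mex_nonneg assms(2)] by simp

lemma Mex_insert_Mex_gt:
  assumes "finite T" "S \<subseteq> T"
  shows "Mex S < Mex (insert (Mex S) T)"
proof -
  have "Mex S + 1 \<le> Mex (insert (Mex S) T)"
  proof (rule Mex_geI)
    fix j assume "0 \<le> j" "j < Mex S + 1"
    then have "j = Mex S \<or> j \<in> S" by (cases "j < Mex S") (auto intro: mem_if_less_Mex)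
    then show "j \<in> insert (Mex S) T" using assms(2) by blast
  qed (use assms(1) in simp)
  then show ?thesis by simp
qed

lemma Mex_shifted_union_ge:
  assumes "finite D" "finite F" "0 \<in> F" "0 \<le> b"
  shows "b + Mex D \<le> Mex ((\<lambda>d. b + d) ` D \<union> {1..b} \<union> F)"
proof (rule Mex_geI)
  show "finite ((\<lambda>d. b + d) ` D \<union> {1..b} \<union> F)" using assms(1,2) by simp
next
  fix j assume j: "0 \<le> j" "j < b + Mex D"
  show "j \<in> (\<lambda>d. b + d) ` D \<union> {1..b} \<union> F"
  proof (cases "j \<le> b")
    case True
    then show ?thesis using assms(3) j(1) by (cases "j = 0") auto
  next
    case False
    then have "j - b \<in> D" using mem_if_less_Mex j by simp
    then have "b + (j - b) \<in> (\<lambda>d. b + d) ` D" by blast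
    then show ?thesis by simp
  qed
qed

lemma finite_Fset: "finite (Fset L)"
  unfolding Fset_def by auto

lemma finite_Dset: "finite (Dset L)"
  unfolding Dset_def by auto

definition thirds :: "(int \<times> int \<times> int) list \<Rightarrow> int set" where
  "thirds L = (\<lambda>(a, b, c). c) ` set L"

lemma Fset_snoc: "Fset (L @ [(x, y, z)]) = Fset L \<union> {x, y, z}"
  unfolding Fset_def by auto

lemma Dset_snoc: "Dset (L @ [(x, y, z)]) = Dset L \<union> {y - x, z - y, z - x}"
  unfolding Dset_def by auto

lemma thirds_snoc: "thirds (L @ [(x, y, z)]) = insert z (thirds L)"
  unfolding thirds_def by auto

definition admissible :: "(int \<times> int \<times> int) list \<Rightarrow> bool" where
  "admissible L \<longleftrightarrow> (0, 0, 0) \<in> set L \<and>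
     (\<forall>x\<in>Fset L. x < Mex (Fset L) + Mex (Dset L) \<or> x \<in> thirds L) \<and>
     (\<forall>c\<in>thirds L. c \<le> Mex (Fset L) + 2 * Mex (Dset L) - 3 \<and>
        c + 1 \<notin> thirds L \<and> c + 2 \<notin> thirds L) \<and>
     (\<forall>d\<in>Dset L. d < Mex (Dset L) \<or> (d \<le> 2 * Mex (Dset L) - 2 \<and> d + 1 \<notin> Dset L))"

definition offset :: "(int \<times> int \<times> int) list \<Rightarrow> int" where
  "offset L =
     (if Mex (Fset L) + Mex (Dset L) \<notin> Fset L then 0
      else if Mex (Dset L) + 1 \<notin> Dset L then 1 else 2)"

lemma offset_cases: "offset L \<in> {0, 1, 2}"
  unfolding offset_def by simp

lemma offset_eq_2_imp: "offset L = 2 \<Longrightarrow> Mex (Dset L) + 1 \<in> Dset L"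
  unfolding offset_def by (auto split: if_splits)

lemma admissible_mem_zero:
  assumes "admissible L"
  shows "0 \<in> Fset L" "0 \<in> Dset L"
  using assms unfolding admissible_def Fset_def Dset_def by force+

lemma admissible_Mex_pos:
  assumes "admissible L"
  shows "1 \<le> Mex (Fset L)" "1 \<le> Mex (Dset L)"
  using Mex_pos finite_Fset finite_Dset admissible_mem_zero[OF assms] by auto

lemma admissible_Dset_le:
  assumes "admissible L" "d \<in> Dset L"
  shows "d \<le> 2 * Mex (Dset L) - 2"
  using assms admissible_Mex_pos[OF assms(1)] unfolding admissible_def by force

lemma admissible_Fset_above:
  assumes "admissible L" "x \<in> Fset L" "Mex (Fset L) + Mex (Dset L) \<le> x"
  shows "x \<le> Mex (Fset L) + 2 * Mex (Dset L) - 3 \<and> x + 1 \<notin> Fset L \<and> x + 2 \<notin> Fset L"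
  using assms unfolding admissible_def by force

lemma offset_avoids:
  assumes "admissible L"
  defines "a \<equiv> Mex (Fset L)" and "m \<equiv> Mex (Dset L)"
  shows "a + m + offset L \<notin> Fset L" "m + offset L \<notin> Dset L"
proof -
  have "m \<notin> Dset L" unfolding m_def by (rule Mex_notin[OF finite_Dset])
  moreover have "a + m \<in> Fset L \<Longrightarrow> a + m + 1 \<notin> Fset L \<and> a + m + 2 \<notin> Fset L"
    using admissible_Fset_above[OF assms(1)] unfolding a_def m_def by force
  moreover have "m + 1 \<in> Dset L \<Longrightarrow> m + 2 \<notin> Dset L"
    using assms(1) unfolding admissible_def m_def by (force simp: add.assoc)
  ultimately show "a + m + offset L \<notin> Fset L" "m + offset L \<notin> Dset L"
    unfolding offset_def a_def[symmetric] m_def[symmetric] by auto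
qed

lemma admissible_lower_Mex_shifted:
  assumes "admissible L" "0 \<le> b"
  shows "b + Mex (Dset L) \<le> Mex ((\<lambda>d. b + d) ` Dset L \<union> {1..b} \<union> Fset L)"
  using Mex_shifted_union_ge admissible_mem_zero[OF assms(1)] assms(2)
  by (simp add: finite_Fset finite_Dset)

lemma Mex_second_coordinate:
  assumes "admissible L"
  defines "a \<equiv> Mex (Fset L)" and "m \<equiv> Mex (Dset L)" and "\<delta> \<equiv> offset L"
  shows "Mex ((\<lambda>d. a + d) ` Dset L \<union> {1..a} \<union> Fset L) = a + m + \<delta>"
    (is "Mex ?S = _")
proof (rule antisym)
  have pos: "1 \<le> a" "1 \<le> m" using admissible_Mex_pos[OF assms(1)] unfolding a_def m_def by auto
  have \<delta>: "0 \<le> \<delta>" "\<delta> \<le> 2" using offset_cases[of L] unfolding \<delta>_def by auto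
  show "Mex ?S \<le> a + m + \<delta>"
    using offset_avoids[OF assms(1)] pos \<delta> unfolding a_def m_def \<delta>_def
    by (intro Mex_le) (auto simp: add.assoc)
  have fin: "finite ?S" by (simp add: finite_Fset finite_Dset)
  have "a + m \<le> Mex ?S"
    using admissible_lower_Mex_shifted[OF assms(1)] pos unfolding m_def by simp
  moreover have "a + m + 1 \<le> Mex ?S" if "1 \<le> \<delta>"
    using Mex_ge_add1[OF fin \<open>a + m \<le> Mex ?S\<close>] that
    unfolding \<delta>_def offset_def a_def m_def by (auto split: if_splits)
  moreover have "a + m + 2 \<le> Mex ?S" if "\<delta> = 2"
  proof -
    have "a + (m + 1) \<in> (\<lambda>d. a + d) ` Dset L"
      using offset_eq_2_imp that unfolding \<delta>_def m_def by blast
    then show ?thesis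
      using Mex_ge_add1[OF fin \<open>1 \<le> \<delta> \<Longrightarrow> a + m + 1 \<le> Mex ?S\<close>] that by (simp add: add.assoc)
  qed
  ultimately show "a + m + \<delta> \<le> Mex ?S" using \<delta> by fastforce
qed

lemma Mex_third_coordinate:
  assumes "admissible L"
  defines "a \<equiv> Mex (Fset L)" and "m \<equiv> Mex (Dset L)"
  assumes "0 \<le> \<delta>" "\<delta> \<le> 2"
  defines "x \<equiv> a + m + \<delta>"
  shows "Mex ((\<lambda>d. x + d) ` Dset L \<union> {1..x} \<union> Fset L) = x + m"
    (is "Mex ?S = _")
proof (rule antisym)
  have pos: "1 \<le> a" "1 \<le> m" using admissible_Mex_pos[OF assms(1)] unfolding a_def m_def by auto
  have "m \<notin> Dset L" unfolding m_def by (rule Mex_notin[OF finite_Dset])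
  moreover have "x + m \<notin> Fset L"
    using admissible_Fset_above[OF assms(1), of "x + m"] pos assms(4,5)
    unfolding x_def a_def m_def by force
  ultimately show "Mex ?S \<le> x + m" using pos assms(4) unfolding x_def by (intro Mex_le) auto
  have "0 \<le> x" using pos assms(4) unfolding x_def by simp
  then show "x + m \<le> Mex ?S"
    unfolding m_def by (rule admissible_lower_Mex_shifted[OF assms(1)])
qed

lemma next_triple_admissible:
  assumes "admissible L"
  defines "a \<equiv> Mex (Fset L)" and "m \<equiv> Mex (Dset L)" and "\<delta> \<equiv> offset L"
  shows "next_triple L = (a, a + m + \<delta>, a + 2 * m + \<delta>)"
proof -
  have \<delta>: "0 \<le> \<delta>" "\<delta> \<le> 2" using offset_cases[of L] unfolding \<delta>_def by auto
  have "Mex ((\<lambda>d. a + d) ` Dset L \<union> {1..a} \<union> Fset L) = a + m + \<delta>"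
    unfolding a_def m_def \<delta>_def by (rule Mex_second_coordinate[OF assms(1)])
  moreover have "Mex ((\<lambda>d. a + m + \<delta> + d) ` Dset L \<union> {1..a + m + \<delta>} \<union> Fset L) = a + 2 * m + \<delta>"
    using Mex_third_coordinate[OF assms(1) \<delta>] unfolding a_def m_def by simp
  ultimately show ?thesis
    unfolding next_triple_def Let_def a_def[symmetric] m_def[symmetric] by simp
qed

lemma Dset_snoc_next_triple:
  assumes "admissible L"
  defines "m \<equiv> Mex (Dset L)" and "\<delta> \<equiv> offset L"
  shows "Dset (L @ [next_triple L]) = Dset L \<union> {m, m + \<delta>, 2 * m + \<delta>}"
  unfolding next_triple_admissible[OF assms(1)] Dset_snoc m_def \<delta>_def
  by (auto simp: algebra_simps)

lemma Mex_Fset_snoc_next_triple_gt: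
  assumes "admissible L"
  shows "Mex (Fset L) < Mex (Fset (L @ [next_triple L]))"
  unfolding next_triple_admissible[OF assms] Fset_snoc
  by (auto intro: Mex_insert_Mex_gt simp: finite_Fset)

lemma Mex_Dset_snoc_next_triple_ge:
  assumes "admissible L"
  defines "m \<equiv> Mex (Dset L)" and "\<delta> \<equiv> offset L"
  shows "m + 1 + \<delta> \<le> Mex (Dset (L @ [next_triple L]))"
proof (rule Mex_geI[OF finite_Dset])
  have \<delta>: "\<delta> \<in> {0, 1, 2}" "\<delta> = 2 \<Longrightarrow> m + 1 \<in> Dset L"
    using offset_cases offset_eq_2_imp unfolding \<delta>_def m_def by auto
  fix j assume j: "0 \<le> j" "j < m + 1 + \<delta>"
  then consider "j < m" | "j = m" | "j = m + \<delta>" | "\<delta> = 2 \<and> j = m + 1" using \<delta>(1) by fastforce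
  then show "j \<in> Dset (L @ [next_triple L])"
    unfolding Dset_snoc_next_triple[OF assms(1)] m_def[symmetric] \<delta>_def[symmetric]
    by cases (use mem_if_less_Mex j \<delta>(2) in \<open>auto simp: m_def\<close>)
qed

lemma admissible_snoc_next_triple:
  assumes "admissible L"
  shows "admissible (L @ [next_triple L])"
proof -
  define a m \<delta> where "a = Mex (Fset L)" and "m = Mex (Dset L)" and "\<delta> = offset L"
  define L' where "L' = L @ [next_triple L]"
  define a' m' where "a' = Mex (Fset L')" and "m' = Mex (Dset L')"
  have next_eq: "next_triple L = (a, a + m + \<delta>, a + 2 * m + \<delta>)"
    using next_triple_admissible[OF assms] unfolding a_def m_def \<delta>_def .
  have pos: "1 \<le> a" "1 \<le> m" using admissible_Mex_pos[OF assms] unfolding a_def m_def by auto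
  have \<delta>: "0 \<le> \<delta>" "\<delta> \<le> 2" using offset_cases[of L] unfolding \<delta>_def by auto
  have F': "Fset L' = Fset L \<union> {a, a + m + \<delta>, a + 2 * m + \<delta>}"
    unfolding L'_def next_eq Fset_snoc ..
  have D': "Dset L' = Dset L \<union> {m, m + \<delta>, 2 * m + \<delta>}"
    unfolding L'_def m_def \<delta>_def by (rule Dset_snoc_next_triple[OF assms])
  have T': "thirds L' = insert (a + 2 * m + \<delta>) (thirds L)"
    unfolding L'_def next_eq thirds_snoc ..
  have a': "a < a'" unfolding a_def a'_def L'_def by (rule Mex_Fset_snoc_next_triple_gt[OF assms])
  have m': "m + 1 + \<delta> \<le> m'"
    unfolding m_def m'_def \<delta>_def L'_def by (rule Mex_Dset_snoc_next_triple_ge[OF assms])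
  have inv: "\<forall>x\<in>Fset L. x < a + m \<or> x \<in> thirds L"
    "\<forall>c\<in>thirds L. c \<le> a + 2 * m - 3 \<and> c + 1 \<notin> thirds L \<and> c + 2 \<notin> thirds L"
    "\<forall>d\<in>Dset L. d < m \<or> (d \<le> 2 * m - 2 \<and> d + 1 \<notin> Dset L)"
    using assms unfolding admissible_def a_def m_def by blast+
  have "\<forall>x\<in>Fset L'. x < a' + m' \<or> x \<in> thirds L'"
    using inv(1) a' m' pos \<delta> unfolding F' T' by force
  moreover have "\<forall>c\<in>thirds L'. c \<le> a' + 2 * m' - 3 \<and> c + 1 \<notin> thirds L' \<and> c + 2 \<notin> thirds L'"
    using inv(2) a' m' pos \<delta> unfolding T' by force
  moreover have "\<forall>d\<in>Dset L'. d < m' \<or> (d \<le> 2 * m' - 2 \<and> d + 1 \<notin> Dset L')"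
  proof
    fix d assume "d \<in> Dset L'"
    then consider "d \<in> Dset L" | "d \<in> {m, m + \<delta>}" | "d = 2 * m + \<delta>" unfolding D' by auto
    then show "d < m' \<or> (d \<le> 2 * m' - 2 \<and> d + 1 \<notin> Dset L')"
    proof cases
      case 1
      then show ?thesis using inv(3) m' \<delta> unfolding D' by fastforce
    next
      case 2
      then show ?thesis using m' \<delta> by auto
    next
      case 3
      have "d + 1 \<notin> Dset L"
        using admissible_Dset_le[OF assms] 3 \<delta> unfolding m_def by force
      then show ?thesis using 3 m' \<delta> pos unfolding D' by auto
    qed
  qed
  moreover have "(0, 0, 0) \<in> set L'" using assms unfolding L'_def admissible_def by simp
  ultimately show ?thesis unfolding admissible_def L'_def[symmetric] a'_def m'_def by blast
qed

lemma admissible_vs: "admissible (vs n)"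
proof (induction n)
  case 0
  have "Mex {0} = 1"
    using Mex_le[of 1 "{0}"] Mex_pos[of "{0}"] by simp
  then show ?case unfolding admissible_def Fset_def Dset_def thirds_def by simp
next
  case (Suc n)
  then show ?case using admissible_snoc_next_triple by simp
qed

lemma v_Suc: "v (Suc n) = next_triple (vs n)"
proof -
  have "length (vs n) = Suc n" by (induction n) auto
  then show ?thesis unfolding v_def by (simp add: nth_append)
qed

theorem corollary5:
  fixes n :: nat
  shows "v1 n - 2 * v2 n + v3 n \<in> {0, -1, -2}"
proof (cases n)
  case 0
  then show ?thesis unfolding v1_def v2_def v3_def v_def by simp
next
  case (Suc k)
  then have "v n = (Mex (Fset (vs k)), Mex (Fset (vs k)) + Mex (Dset (vs k)) + offset (vs k),
      Mex (Fset (vs k)) + 2 * Mex (Dset (vs k)) + offset (vs k))"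
    using next_triple_admissible[OF admissible_vs] v_Suc by simp
  then have "v1 n - 2 * v2 n + v3 n = - offset (vs k)"
    unfolding v1_def v2_def v3_def by simp
  then show ?thesis using offset_cases[of "vs k"] by auto
qed

end
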